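(* Fix $\beta>0$ and $\delta\in(0,\pi)$. Let $\rho_\varepsilon(\varphi)$ and $d_\varepsilon(\varphi)$ be families of real $2\pi$-periodic functions, depending smoothly on $(\varepsilon,\varphi)$, such that for every $\varepsilon$ and every $\bar\varphi$ $$\int_{\bar\varphi-d_\varepsilon(\bar\varphi)}^{\bar\varphi+d_\varepsilon(\bar\varphi)}\rho_\varepsilon(\xi)e^{i\xi}\,d\xi=\frac{2}{\beta}\sin\big(\delta+d_\varepsilon(\bar\varphi)\big)e^{i\bar\varphi},$$ and such that $\rho_0\equiv1$ and $d_0$ is a constant. Let $\rho_1=\frac{d}{d\varepsilon}\big|_{\varepsilon=0}\rho_\varepsilon$ and $d_1=\frac{d}{d\varepsilon}\big|_{\varepsilon=0}d_\varepsilon$. Then: (a) $\beta\sin d_0=\sin(\delta+d_0)$; (b) the Fourier coefficients $\widehat{\rho}_{1n}$ of $\rho_1$ and $\widehat{d}_{1n}$ of $d_1$ all vanish except for those $n$ which satisfy the Gutkin relation $n\tan(d_0)=\tan(nd_0)$.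
   Context: The displayed equation is the analytic form of the $\delta$-Gutkin property of a magnetic billiard (Larmor radius $1/\beta$) whose boundary has radius of curvature $\rho$ as a function of the tangent angle; $\rho_0\equiv 1$, $d_0$ constant corresponds to the unit circle. *)

theory Defs
  imports "HOL-Analysis.Analysis"
begin

text \<open>Taken coinductively, this says that partial derivatives of all orders exist on S.\<close>
coinductive smooth2_on :: "(real \<times> real) set \<Rightarrow> (real \<times> real \<Rightarrow> real) \<Rightarrow> bool" where
  "open S \<Longrightarrow>
   (\<forall>z\<in>S. (f has_derivative (\<lambda>h. fst h * g1 z + snd h * g2 z)) (at z)) \<Longrightarrow>
   smooth2_on S g1 \<Longrightarrow> smooth2_on S g2 \<Longrightarrow> smooth2_on S f"

definition oint :: "real \<Rightarrow> real \<Rightarrow> (real \<Rightarrow> complex) \<Rightarrow> complex" where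
  "oint a b f = (if a \<le> b then integral {a..b} f else - integral {b..a} f)"

definition fourier_coeff :: "(real \<Rightarrow> real) \<Rightarrow> int \<Rightarrow> complex" where
  "fourier_coeff f n =
     integral {0..2*pi} (\<lambda>x. complex_of_real (f x) * exp (- \<i> * of_int n * of_real x)) / (2 * pi)"

end

theory Submission
  imports Defs
begin

(* Substituting xi = phi + d t fixes the limits of the Gutkin integral:
   int_{-1}^{1} d rho(phi + d t) e^{i(phi + d t)} dt = (2/beta) sin(delta + d) e^{i phi}.
   At eps = 0 this reads 2 sin d0 = (2/beta) sin(delta + d0), which is (a).  Differentiating at
   eps = 0 under the integral sign gives the linearised identity
   int_{phi-d0}^{phi+d0} rho1(xi) e^{i xi} dxi = C d1(phi) e^{i phi},  C = (2/beta) cos(delta + d0) - 2 cos d0,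
   and C <> 0, since otherwise (a) would give sin delta = 0.  The left side is a convolution of
   rho1 e^{i xi} with the indicator of [-d0, d0], so its (n+1)-st Fourier coefficient is
   w(n+1) rho1^_n with w(k) = 2 sin(k d0) / k; hence w(n+1) rho1^_n = C d1^_n.  As rho1 and d1 are real,
   the same relation for -n conjugates to w(1-n) rho1^_n = C d1^_n.  So both coefficients vanish
   unless w(1-n) = w(1+n), and that is exactly the Gutkin relation n tan d0 = tan(n d0). *)

lemma smooth2_onE:
  assumes "smooth2_on S f"
  obtains g1 g2 where "open S"
    and "\<And>z. z \<in> S \<Longrightarrow> (f has_derivative (\<lambda>h. fst h * g1 z + snd h * g2 z)) (at z)"
    and "smooth2_on S g1" "smooth2_on S g2"
  using assms by (cases rule: smooth2_on.cases) auto

lemma smooth2_on_imp_continuous_on: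
  assumes "smooth2_on S f"
  shows "continuous_on S f"
proof -
  obtain g1 g2 where "\<And>z. z \<in> S \<Longrightarrow> (f has_derivative (\<lambda>h. fst h * g1 z + snd h * g2 z)) (at z)"
    using smooth2_onE[OF assms] by blast
  then show ?thesis
    by (metis continuous_at_imp_continuous_on has_derivative_continuous)
qed

lemma continuous_on_compose_curried:
  fixes g :: "real \<Rightarrow> real \<Rightarrow> 'a::topological_space"
  assumes "continuous_on (U \<times> UNIV) (\<lambda>(e, x). g e x)"
    and "continuous_on S a" "continuous_on S b" "\<And>p. p \<in> S \<Longrightarrow> a p \<in> U"
  shows "continuous_on S (\<lambda>p. g (a p) (b p))"
proof -
  have "continuous_on S (\<lambda>p. (a p, b p))" "(\<lambda>p. (a p, b p)) ` S \<subseteq> U \<times> UNIV"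
    using assms(2-4) by (auto intro: continuous_on_Pair)
  from continuous_on_compose2[OF assms(1) this] show ?thesis by simp
qed

(* Differentiability is recorded as the chain rule along curves (u t, v t), the only form in which
   it is used. *)
locale C1_family =
  fixes U :: "real set" and f f\<^sub>e f\<^sub>x :: "real \<Rightarrow> real \<Rightarrow> real"
  assumes continuous: "continuous_on (U \<times> UNIV) (\<lambda>(e, x). f e x)"
    and continuous_partials:
      "continuous_on (U \<times> UNIV) (\<lambda>(e, x). f\<^sub>e e x)" "continuous_on (U \<times> UNIV) (\<lambda>(e, x). f\<^sub>x e x)"
    and chain_rule: "\<And>u v u' v' t T. u t \<in> U \<Longrightarrow> (u has_real_derivative u') (at t within T) \<Longrightarrow>
      (v has_real_derivative v') (at t within T) \<Longrightarrow>
      ((\<lambda>t. f (u t) (v t)) has_real_derivative u' * f\<^sub>e (u t) (v t) + v' * f\<^sub>x (u t) (v t)) (at t within T)"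
begin

lemma has_real_derivative_param:
  assumes "e \<in> U"
  shows "((\<lambda>e. f e x) has_real_derivative f\<^sub>e e x) (at e within T)"
proof -
  have "((\<lambda>e. f e x) has_real_derivative 1 * f\<^sub>e e x + 0 * f\<^sub>x e x) (at e within T)"
    using assms by (intro chain_rule[where u = "\<lambda>e. e" and v = "\<lambda>_. x"] DERIV_ident DERIV_const)
  then show ?thesis by simp
qed

lemma has_real_derivative_var:
  assumes "e \<in> U"
  shows "((\<lambda>x. f e x) has_real_derivative f\<^sub>x e x) (at x within T)"
proof -
  have "((\<lambda>x. f e x) has_real_derivative 0 * f\<^sub>e e x + 1 * f\<^sub>x e x) (at x within T)"
    using assms by (intro chain_rule[where u = "\<lambda>_. e" and v = "\<lambda>x. x"] DERIV_ident DERIV_const)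
  then show ?thesis by simp
qed

end

lemma smooth2_on_imp_C1_family:
  fixes f :: "real \<Rightarrow> real \<Rightarrow> real"
  assumes "smooth2_on (U \<times> UNIV) (\<lambda>(e, x). f e x)"
  obtains f\<^sub>e f\<^sub>x where "C1_family U f f\<^sub>e f\<^sub>x"
proof -
  obtain g1 g2 where g: "\<And>z. z \<in> U \<times> UNIV \<Longrightarrow>
      ((\<lambda>(e, x). f e x) has_derivative (\<lambda>h. fst h * g1 z + snd h * g2 z)) (at z)"
    and "smooth2_on (U \<times> UNIV) g1" "smooth2_on (U \<times> UNIV) g2"
    using smooth2_onE[OF assms] by blast
  then have cont: "continuous_on (U \<times> UNIV) (\<lambda>(e, x). g1 (e, x))" "continuous_on (U \<times> UNIV) (\<lambda>(e, x). g2 (e, x))"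
    by (simp_all add: smooth2_on_imp_continuous_on)
  have chain: "((\<lambda>t. f (u t) (v t)) has_real_derivative u' * g1 (u t, v t) + v' * g2 (u t, v t))
      (at t within T)"
    if "u t \<in> U" "(u has_real_derivative u') (at t within T)" "(v has_real_derivative v') (at t within T)"
    for u v u' v' t T
  proof -
    have "((\<lambda>t. (u t, v t)) has_derivative (\<lambda>h. (u' * h, v' * h))) (at t within T)"
      using that(2,3) unfolding has_field_derivative_def by (intro has_derivative_Pair) auto
    from diff_chain_within[OF this has_derivative_at_withinI[OF g]] that(1)
    have "((\<lambda>t. f (u t) (v t)) has_derivative (\<lambda>h. (u' * g1 (u t, v t) + v' * g2 (u t, v t)) * h)) (at t within T)"
      by (simp add: o_def algebra_simps)
    then show ?thesis
      unfolding has_field_derivative_def by (rule has_derivative_eq_rhs) (simp add: fun_eq_iff)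
  qed
  show ?thesis
    by (rule that, rule C1_family.intro[OF smooth2_on_imp_continuous_on[OF assms] cont chain])
qed

lemma smooth2_on_has_real_derivative_param:
  fixes f :: "real \<Rightarrow> real \<Rightarrow> real"
  assumes "smooth2_on (U \<times> UNIV) (\<lambda>(e, x). f e x)" "e \<in> U"
  shows "((\<lambda>e. f e x) has_real_derivative deriv (\<lambda>e. f e x) e) (at e)"
proof -
  obtain f\<^sub>e f\<^sub>x where "C1_family U f f\<^sub>e f\<^sub>x"
    using smooth2_on_imp_C1_family[OF assms(1)] .
  from C1_family.has_real_derivative_param[OF this assms(2), of x UNIV] show ?thesis
    by (metis DERIV_imp_deriv)
qed

lemma smooth2_on_continuous_on_deriv_param:
  fixes f :: "real \<Rightarrow> real \<Rightarrow> real"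
  assumes "smooth2_on (U \<times> UNIV) (\<lambda>(e, x). f e x)" "e \<in> U"
  shows "continuous_on UNIV (\<lambda>x. deriv (\<lambda>e. f e x) e)"
proof -
  obtain f\<^sub>e f\<^sub>x where f: "C1_family U f f\<^sub>e f\<^sub>x"
    using smooth2_on_imp_C1_family[OF assms(1)] .
  have "deriv (\<lambda>e. f e x) e = f\<^sub>e e x" for x
    using C1_family.has_real_derivative_param[OF f assms(2)] by (rule DERIV_imp_deriv)
  moreover have "continuous_on UNIV (\<lambda>x. f\<^sub>e e x)"
    using assms(2) by (intro continuous_on_compose_curried[OF C1_family.continuous_partials(1)[OF f]] continuous_intros) auto
  ultimately show ?thesis by simp
qed

lemma has_vector_derivative_exp_ii:
  assumes "(y has_real_derivative y') (at t within T)"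
  shows "((\<lambda>t. exp (\<i> * complex_of_real (y t))) has_vector_derivative
     exp (\<i> * complex_of_real (y t)) * (\<i> * complex_of_real y')) (at t within T)"
proof -
  have "((\<lambda>t. complex_of_real (y t)) has_vector_derivative complex_of_real y') (at t within T)"
    using assms by (rule has_vector_derivative_of_real)
  moreover have "((\<lambda>z. exp (\<i> * z)) has_field_derivative exp (\<i> * complex_of_real (y t)) * \<i>)
      (at (complex_of_real (y t)) within (\<lambda>t. complex_of_real (y t)) ` T)"
    by (auto intro!: derivative_eq_intros)
  ultimately show ?thesis
    by (auto dest: field_vector_diff_chain_within simp: o_def ac_simps)
qed

lemma exp_ii_int_periodic:
  "exp (\<i> * of_int k * complex_of_real (x + 2 * pi)) = exp (\<i> * of_int k * complex_of_real x)"
proof -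
  have "\<i> * of_int k * complex_of_real (x + 2 * pi) = \<i> * of_int k * complex_of_real x + \<i> * (of_int k * (of_real pi * 2))"
    by (simp add: algebra_simps)
  then show ?thesis by (simp only: exp_plus_2pin)
qed

lemma has_integral_oint_rescaled:
  fixes f :: "real \<Rightarrow> complex"
  assumes "continuous_on UNIV f"
  shows "((\<lambda>t. complex_of_real s * f (\<phi> + s * t)) has_integral oint (\<phi> - s) (\<phi> + s) f) {-1..1}"
proof -
  have "(\<lambda>t. \<phi> + s * t) ` {-1..1} \<subseteq> {\<phi> - \<bar>s\<bar>..\<phi> + \<bar>s\<bar>}"
  proof (rule image_subsetI)
    fix t :: real assume "t \<in> {-1..1}"
    then have "\<bar>s * t\<bar> \<le> \<bar>s\<bar>" by (auto simp: abs_mult intro: mult_left_le)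
    then show "\<phi> + s * t \<in> {\<phi> - \<bar>s\<bar>..\<phi> + \<bar>s\<bar>}" by auto
  qed
  then have "((\<lambda>t. s *\<^sub>R f (\<phi> + s * t)) has_integral
      integral {\<phi> + s * (-1)..\<phi> + s * 1} f - integral {\<phi> + s * 1..\<phi> + s * (-1)} f) {-1..1}"
    by (intro has_integral_substitution_general[of "{}" _ _ _ "\<phi> - \<bar>s\<bar>" "\<phi> + \<bar>s\<bar>" _ "\<lambda>_. s"])
      (auto intro!: continuous_on_subset[OF assms] derivative_eq_intros continuous_intros)
  moreover have "integral {\<phi> + s * (-1)..\<phi> + s * 1} f - integral {\<phi> + s * 1..\<phi> + s * (-1)} f
      = oint (\<phi> - s) (\<phi> + s) f"
    by (cases "s = 0") (auto simp: oint_def)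
  ultimately show ?thesis by (simp add: scaleR_conv_of_real)
qed

lemma integral_periodic_shift:
  fixes g :: "real \<Rightarrow> 'a::banach"
  assumes g: "continuous_on UNIV g" and per: "\<And>x. g (x + p) = g x" and p: "0 \<le> p"
  shows "integral {0..p} (\<lambda>x. g (x + a)) = integral {0..p} g"
proof -
  define M where "M = \<bar>a\<bar>"
  define P where "P u = integral {-M - 1..u} g" for u
  have P': "(P has_vector_derivative g u) (at u)" if "-M \<le> u" "u \<le> M + p" for u
  proof -
    have "(P has_vector_derivative g u) (at u within {-M - 1..M + p + 1})"
      unfolding P_def using that by (intro integral_has_vector_derivative continuous_on_subset[OF g]) auto
    then show ?thesis using that by (simp add: at_within_Icc_at)
  qed
  \<comment> \<open>the integral over the window \<open>[b, b + p]\<close> is constant in \<open>b\<close>, its derivative being \<open>g (b + p) - g b = 0\<close>\<close>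
  have "((\<lambda>b. P (b + p) - P b) has_vector_derivative 0) (at b within {-M..M})" if "b \<in> {-M..M}" for b
  proof -
    have "((\<lambda>b. b + p) has_vector_derivative 1) (at b)"
      by (auto intro!: derivative_eq_intros)
    moreover have "(P has_vector_derivative g (b + p)) (at (b + p))"
      using P' that p by simp
    ultimately have "((\<lambda>b. P (b + p)) has_vector_derivative g (b + p)) (at b)"
      by (auto dest: vector_diff_chain_at simp: o_def)
    then have "((\<lambda>b. P (b + p) - P b) has_vector_derivative g (b + p) - g b) (at b)"
      using P'[of b] that p by (intro has_vector_derivative_diff) auto
    then show ?thesis using per by (simp add: has_vector_derivative_at_within)
  qed
  then obtain c where c: "\<And>b. b \<in> {-M..M} \<Longrightarrow> P (b + p) - P b = c"
    by (rule has_vector_derivative_zero_constant[rotated]) auto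
  have P_diff: "P (b + p) - P b = integral {b..b + p} g" if "b \<in> {-M..M}" for b
  proof -
    have "g integrable_on {-M - 1..b + p}"
      by (intro integrable_continuous_real continuous_on_subset[OF g]) auto
    then show ?thesis
      using Henstock_Kurzweil_Integration.integral_combine[of "-M - 1" b "b + p" g] that p
      unfolding P_def by (simp add: algebra_simps)
  qed
  have "integral {0..p} (\<lambda>x. g (x + a)) = integral {a..a + p} g"
    using integral_shift_real_ivl[of a a "a + p" g] by simp
  also have "\<dots> = integral {0..p} g"
  proof -
    have "a \<in> {-M..M}" "0 \<in> {-M..M}" by (auto simp: M_def)
    from this[THEN P_diff] this[THEN c] show ?thesis by simp
  qed
  finally show ?thesis .
qed

(* chord_weight s k is the integral of exp (i k t) over [-s, s] *)
definition chord_weight :: "real \<Rightarrow> int \<Rightarrow> real" where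
  "chord_weight s k = (if k = 0 then 2 * s else 2 * sin (k * s) / k)"

lemma integral_exp_ii_eq_chord_weight:
  "complex_of_real s * integral {-1..1} (\<lambda>t. exp (\<i> * complex_of_real (k * s * t)))
    = complex_of_real (chord_weight s k)"
proof (cases "k = 0")
  case False
  define F where "F t = - \<i> * exp (\<i> * complex_of_real (k * s * t)) / of_int k" for t
  have "((\<lambda>t. complex_of_real s * exp (\<i> * complex_of_real (k * s * t))) has_integral F 1 - F (-1)) {-1..1}"
  proof (rule fundamental_theorem_of_calculus)
    fix t :: real
    have "((\<lambda>t. k * s * t) has_real_derivative k * s) (at t within {-1..1})"
      by (auto intro!: derivative_eq_intros)
    from has_vector_derivative_exp_ii[OF this]
    show "(F has_vector_derivative complex_of_real s * exp (\<i> * complex_of_real (k * s * t))) (at t within {-1..1})"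
      unfolding F_def using False by (auto intro!: derivative_eq_intros simp: algebra_simps)
  qed simp
  then have "integral {-1..1} (\<lambda>t. complex_of_real s * exp (\<i> * complex_of_real (k * s * t))) = F 1 - F (-1)"
    by (rule integral_unique)
  also have "\<dots> = complex_of_real (2 * sin (k * s) / k)"
    unfolding F_def cis_conv_exp[symmetric] using False by (simp add: cis.code complex_eq_iff)
  finally show ?thesis
    using False by (simp add: chord_weight_def)
qed (simp add: chord_weight_def scaleR_conv_of_real)

lemma oint_exp_ii:
  "oint (\<phi> - s) (\<phi> + s) (\<lambda>\<xi>. exp (\<i> * complex_of_real \<xi>)) = complex_of_real (2 * sin s) * exp (\<i> * complex_of_real \<phi>)"
proof -
  have "oint (\<phi> - s) (\<phi> + s) (\<lambda>\<xi>. exp (\<i> * complex_of_real \<xi>))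
      = integral {-1..1} (\<lambda>t. complex_of_real s * exp (\<i> * complex_of_real (\<phi> + s * t)))"
    by (intro integral_unique[symmetric] has_integral_oint_rescaled continuous_intros)
  also have "\<dots> = exp (\<i> * complex_of_real \<phi>) * (complex_of_real s * integral {-1..1} (\<lambda>t. exp (\<i> * complex_of_real (s * t))))"
    by (simp add: distrib_left exp_add algebra_simps)
  finally show ?thesis
    using integral_exp_ii_eq_chord_weight[of s 1] by (simp add: chord_weight_def)
qed

lemma integral_exp_ii_boundary:
  "integral {-1..1} (\<lambda>t. (1 + \<i> * complex_of_real (s * t)) * exp (\<i> * complex_of_real (\<phi> + s * t)))
    = complex_of_real (2 * cos s) * exp (\<i> * complex_of_real \<phi>)"
proof -
  define F where "F t = complex_of_real t * exp (\<i> * complex_of_real (\<phi> + s * t))" for t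
  have "((\<lambda>t. (1 + \<i> * complex_of_real (s * t)) * exp (\<i> * complex_of_real (\<phi> + s * t))) has_integral F 1 - F (-1)) {-1..1}"
  proof (rule fundamental_theorem_of_calculus)
    fix t :: real
    have "((\<lambda>t. \<phi> + s * t) has_real_derivative s) (at t within {-1..1})"
      by (auto intro!: derivative_eq_intros)
    from has_vector_derivative_exp_ii[OF this]
    show "(F has_vector_derivative (1 + \<i> * complex_of_real (s * t)) * exp (\<i> * complex_of_real (\<phi> + s * t))) (at t within {-1..1})"
      unfolding F_def by (auto intro!: derivative_eq_intros simp: algebra_simps)
  qed simp
  moreover have "F 1 - F (-1) = complex_of_real (2 * cos s) * exp (\<i> * complex_of_real \<phi>)"
    unfolding F_def cis_conv_exp[symmetric] by (simp add: cis.code complex_eq_iff sin_add cos_add sin_diff cos_diff algebra_simps)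
  ultimately show ?thesis by (simp add: integral_unique)
qed

(* tan x = sin x / cos x is 0 where cos x = 0, since x / 0 = 0 *)
lemma mult_tan_eq_tan_mult:
  fixes m s :: real
  assumes "m * sin s * cos (m * s) = cos s * sin (m * s)"
  shows "m * tan s = tan (m * s)"
proof (cases "m = 0 \<or> cos s = 0 \<or> cos (m * s) = 0")
  case True
  then show ?thesis
    using assms sin_cos_squared_add[of s] sin_cos_squared_add[of "m * s"]
    by (auto simp: tan_def power2_eq_square)
next
  case False
  then show ?thesis using assms by (simp add: tan_def field_simps)
qed

lemma gutkin_relation_if_chord_weight_eq:
  assumes "chord_weight s (1 - m) = chord_weight s (1 + m)"
  shows "of_int m * tan s = tan (of_int m * s)"
proof (rule mult_tan_eq_tan_mult)
  show "of_int m * sin s * cos (of_int m * s) = cos s * sin (of_int m * s)"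
  proof (cases "m = 1 \<or> m = -1")
    case False
    then have "real_of_int (1 + m) * sin ((1 - m) * s) = real_of_int (1 - m) * sin ((1 + m) * s)"
      using assms by (auto simp: chord_weight_def field_simps split: if_splits)
    then show ?thesis
      by (simp add: sin_diff sin_add algebra_simps distrib_right)
  qed auto
qed

lemma cos_add_neq_mult_cos:
  fixes \<beta> \<delta> d :: real
  assumes "\<beta> * sin d = sin (\<delta> + d)" and "sin \<delta> \<noteq> 0"
  shows "cos (\<delta> + d) \<noteq> \<beta> * cos d"
proof
  assume "cos (\<delta> + d) = \<beta> * cos d"
  then have "sin ((\<delta> + d) - d) = 0"
    unfolding sin_diff assms(1)[symmetric] by simp
  with assms(2) show False by simp
qed

lemma fourier_coeff_uminus: "fourier_coeff f (- n) = cnj (fourier_coeff f n)"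
  unfolding fourier_coeff_def by (simp add: integral_cnj exp_cnj)

lemma integral_shift_average_mult_exp:
  fixes g :: "real \<Rightarrow> complex" and s :: real and k :: int
  assumes g: "continuous_on UNIV g" and per: "\<And>x. g (x + 2 * pi) = g x"
  shows "integral {0..2*pi} (\<lambda>\<phi>. integral {-1..1} (\<lambda>t. g (\<phi> + s * t)) * exp (- \<i> * of_int k * of_real \<phi>))
    = integral {-1..1} (\<lambda>t. exp (\<i> * of_real (k * s * t)))
      * integral {0..2*pi} (\<lambda>\<phi>. g \<phi> * exp (- \<i> * of_int k * of_real \<phi>))"
proof -
  define h where "h x = g x * exp (- \<i> * of_int k * of_real x)" for x
  have h: "continuous_on UNIV h" "h (x + 2 * pi) = h x" for x
    unfolding h_def using exp_ii_int_periodic[of "-k" x] by (auto intro!: continuous_intros g simp: per)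
  have shift: "g (\<phi> + s * t) * exp (- \<i> * of_int k * of_real \<phi>) = exp (\<i> * of_real (k * s * t)) * h (\<phi> + s * t)"
    for \<phi> t
    unfolding h_def by (simp add: mult.left_commute exp_add[symmetric] algebra_simps)
  have "integral {0..2*pi} (\<lambda>\<phi>. integral {-1..1} (\<lambda>t. g (\<phi> + s * t)) * exp (- \<i> * of_int k * of_real \<phi>))
      = integral {0..2*pi} (\<lambda>\<phi>. integral {-1..1} (\<lambda>t. exp (\<i> * of_real (k * s * t)) * h (\<phi> + s * t)))"
    by (simp only: shift[symmetric] integral_mult_left)
  also have "\<dots> = integral {-1..1} (\<lambda>t. integral {0..2*pi} (\<lambda>\<phi>. exp (\<i> * of_real (k * s * t)) * h (\<phi> + s * t)))"
  proof -
    have "continuous_on (cbox (0, -1) (2*pi, 1)) (\<lambda>(\<phi>, t). exp (\<i> * of_real (k * s * t)) * h (\<phi> + s * t))"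
      unfolding case_prod_beta' by (intro continuous_intros continuous_on_compose2[OF h(1)]) auto
    from integral_swap_continuous[OF this] show ?thesis by (simp add: cbox_interval)
  qed
  also have "\<dots> = integral {-1..1} (\<lambda>t. exp (\<i> * of_real (k * s * t)) * integral {0..2*pi} h)"
    using integral_periodic_shift[OF h(1) h(2)] by simp
  finally show ?thesis
    unfolding h_def[abs_def] integral_mult_left .
qed

lemma fourier_coeff_chord_relation:
  fixes f g :: "real \<Rightarrow> real" and s C :: real
  assumes f: "continuous_on UNIV f" and per: "\<And>x. f (x + 2 * pi) = f x"
    and chord: "\<And>\<phi>. oint (\<phi> - s) (\<phi> + s) (\<lambda>\<xi>. of_real (f \<xi>) * exp (\<i> * of_real \<xi>))
      = of_real (C * g \<phi>) * exp (\<i> * of_real \<phi>)"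
  shows "of_real (chord_weight s (n + 1)) * fourier_coeff f n = of_real C * fourier_coeff g n"
proof -
  define F where "F = (\<lambda>\<xi>. of_real (f \<xi>) * exp (\<i> * of_real \<xi>))"
  define E where "E \<phi> = exp (- \<i> * of_int (n + 1) * of_real \<phi>)" for \<phi>
  have F: "continuous_on UNIV F" "F (x + 2 * pi) = F x" for x
    unfolding F_def using exp_ii_int_periodic[of 1 x] by (auto intro!: continuous_intros f simp: per)
  have exp_E: "exp (\<i> * of_real \<phi>) * E \<phi> = exp (- \<i> * of_int n * of_real \<phi>)" for \<phi>
    unfolding E_def by (simp add: exp_add[symmetric] algebra_simps)
  have oint_F: "oint (\<phi> - s) (\<phi> + s) F = of_real s * integral {-1..1} (\<lambda>t. F (\<phi> + s * t))" for \<phi>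
    using integral_unique[OF has_integral_oint_rescaled[OF F(1)]] by simp
  have "of_real (2 * pi) * (of_real (chord_weight s (n + 1)) * fourier_coeff f n)
      = of_real s * integral {-1..1} (\<lambda>t. exp (\<i> * of_real ((n + 1) * s * t)))
        * integral {0..2*pi} (\<lambda>\<phi>. F \<phi> * E \<phi>)"
    using integral_exp_ii_eq_chord_weight[of s "n + 1"]
    by (simp add: F_def mult.assoc exp_E fourier_coeff_def)
  also have "\<dots> = integral {0..2*pi} (\<lambda>\<phi>. oint (\<phi> - s) (\<phi> + s) F * E \<phi>)"
    using integral_shift_average_mult_exp[OF F, of s "n + 1"] by (simp add: oint_F E_def mult.assoc)
  also have "\<dots> = integral {0..2*pi} (\<lambda>\<phi>. of_real C * (of_real (g \<phi>) * exp (- \<i> * of_int n * of_real \<phi>)))"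
    using chord by (simp add: F_def mult.assoc exp_E)
  also have "\<dots> = of_real (2 * pi) * (of_real C * fourier_coeff g n)"
    by (simp add: fourier_coeff_def)
  finally show ?thesis by simp
qed

lemma fourier_coeffs_vanish_unless_gutkin:
  fixes f g :: "real \<Rightarrow> real"
  assumes rel: "\<And>n. of_real (chord_weight s (n + 1)) * fourier_coeff f n = of_real C * fourier_coeff g n"
    and "C \<noteq> 0" and "of_int n * tan s \<noteq> tan (of_int n * s)"
  shows "fourier_coeff f n = 0 \<and> fourier_coeff g n = 0"
proof -
  have w: "chord_weight s (1 - n) \<noteq> chord_weight s (1 + n)"
    using gutkin_relation_if_chord_weight_eq assms(3) by blast
  have plus: "of_real (chord_weight s (1 + n)) * fourier_coeff f n = of_real C * fourier_coeff g n"
    using rel[of n] by (simp add: add.commute)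
  \<comment> \<open>\<open>f\<close> and \<open>g\<close> are real, so the relation for \<open>-n\<close> conjugates to a second one for \<open>n\<close>\<close>
  have minus: "of_real (chord_weight s (1 - n)) * fourier_coeff f n = of_real C * fourier_coeff g n"
    using arg_cong[OF rel[of "-n"], of cnj] by (simp add: fourier_coeff_uminus)
  from plus minus have "of_real (chord_weight s (1 - n) - chord_weight s (1 + n)) * fourier_coeff f n = 0"
    by (simp add: algebra_simps)
  with w have "fourier_coeff f n = 0" by simp
  with plus \<open>C \<noteq> 0\<close> show ?thesis by simp
qed

lemma has_vector_derivative_rescaled_chord_integral:
  fixes \<rho> d \<rho>\<^sub>e \<rho>\<^sub>x d\<^sub>e d\<^sub>x :: "real \<Rightarrow> real \<Rightarrow> real" and \<phi> :: real
  assumes \<rho>: "C1_family U \<rho> \<rho>\<^sub>e \<rho>\<^sub>x" and d: "C1_family U d d\<^sub>e d\<^sub>x"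
    and U: "open U" "convex U" "e\<^sub>0 \<in> U"
  defines "y \<equiv> \<lambda>e t. \<phi> + d e \<phi> * t"
  shows "((\<lambda>e. integral {-1..1} (\<lambda>t. of_real (d e \<phi> * \<rho> e (y e t)) * exp (\<i> * of_real (y e t))))
    has_vector_derivative integral {-1..1} (\<lambda>t.
        of_real (d\<^sub>e e\<^sub>0 \<phi> * \<rho> e\<^sub>0 (y e\<^sub>0 t) + d e\<^sub>0 \<phi> * (\<rho>\<^sub>e e\<^sub>0 (y e\<^sub>0 t) + d\<^sub>e e\<^sub>0 \<phi> * t * \<rho>\<^sub>x e\<^sub>0 (y e\<^sub>0 t)))
          * exp (\<i> * of_real (y e\<^sub>0 t))
      + of_real (d e\<^sub>0 \<phi> * \<rho> e\<^sub>0 (y e\<^sub>0 t)) * (exp (\<i> * of_real (y e\<^sub>0 t)) * (\<i> * of_real (d\<^sub>e e\<^sub>0 \<phi> * t)))))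
    (at e\<^sub>0)"
proof -
  interpret \<rho>: C1_family U \<rho> \<rho>\<^sub>e \<rho>\<^sub>x by (fact \<rho>)
  interpret d: C1_family U d d\<^sub>e d\<^sub>x by (fact d)
  define K where "K e t = of_real (d e \<phi> * \<rho> e (y e t)) * exp (\<i> * of_real (y e t))" for e t
  define K' where "K' e t =
      of_real (d\<^sub>e e \<phi> * \<rho> e (y e t) + d e \<phi> * (\<rho>\<^sub>e e (y e t) + d\<^sub>e e \<phi> * t * \<rho>\<^sub>x e (y e t)))
        * exp (\<i> * of_real (y e t))
      + of_real (d e \<phi> * \<rho> e (y e t)) * (exp (\<i> * of_real (y e t)) * (\<i> * of_real (d\<^sub>e e \<phi> * t)))" for e t
  have "((\<lambda>e. K e t) has_vector_derivative K' e t) (at e within U)" if "e \<in> U" for e t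
  proof -
    have y: "((\<lambda>e. y e t) has_real_derivative d\<^sub>e e \<phi> * t) (at e within U)"
      unfolding y_def using d.has_real_derivative_param[OF that] by (auto intro!: derivative_eq_intros)
    have "((\<lambda>e. d e \<phi> * \<rho> e (y e t)) has_real_derivative
        d\<^sub>e e \<phi> * \<rho> e (y e t) + d e \<phi> * (\<rho>\<^sub>e e (y e t) + d\<^sub>e e \<phi> * t * \<rho>\<^sub>x e (y e t))) (at e within U)"
      using \<rho>.chain_rule[of "\<lambda>e. e" e 1 U, OF _ _ y] d.has_real_derivative_param[OF that] that
      by (auto intro!: derivative_eq_intros simp: algebra_simps)
    from has_vector_derivative_mult[OF has_vector_derivative_of_real[OF this] has_vector_derivative_exp_ii[OF y]]
    show ?thesis unfolding K_def K'_def by (simp add: algebra_simps)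
  qed
  moreover have "K e integrable_on cbox (-1) 1" if "e \<in> U" for e
    unfolding K_def y_def using that
    by (intro integrable_continuous continuous_intros continuous_on_compose_curried[OF \<rho>.continuous]) auto
  moreover have "continuous_on (U \<times> cbox (-1) 1) (\<lambda>(e, t). K' e t)"
    unfolding case_prod_beta' K'_def y_def
    by (intro continuous_intros continuous_on_compose_curried[OF \<rho>.continuous]
        continuous_on_compose_curried[OF \<rho>.continuous_partials(1)] continuous_on_compose_curried[OF \<rho>.continuous_partials(2)]
        continuous_on_compose_curried[OF d.continuous] continuous_on_compose_curried[OF d.continuous_partials(1)]) auto
  ultimately have "((\<lambda>e. integral (cbox (-1) 1) (K e)) has_vector_derivative integral (cbox (-1) 1) (K' e\<^sub>0))
      (at e\<^sub>0 within U)"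
    using U by (intro leibniz_rule_vector_derivative)
  then show ?thesis
    using at_within_open[OF U(3,1)] unfolding K_def K'_def by simp
qed

lemma integral_chord_variation_at_circle:
  fixes r :: "real \<Rightarrow> real"
  assumes "continuous_on UNIV r"
  shows "integral {-1..1} (\<lambda>t. of_real s * (of_real (r (\<phi> + s * t)) * exp (\<i> * of_real (\<phi> + s * t)))
        + of_real D * ((1 + \<i> * of_real (s * t)) * exp (\<i> * of_real (\<phi> + s * t))))
      = oint (\<phi> - s) (\<phi> + s) (\<lambda>\<xi>. of_real (r \<xi>) * exp (\<i> * of_real \<xi>))
        + of_real (2 * cos s * D) * exp (\<i> * of_real \<phi>)"
proof -
  have "continuous_on UNIV (\<lambda>\<xi>. of_real (r \<xi>) * exp (\<i> * of_real \<xi>))"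
    using assms by (intro continuous_intros)
  from has_integral_oint_rescaled[OF this]
  have "((\<lambda>t. of_real s * (of_real (r (\<phi> + s * t)) * exp (\<i> * of_real (\<phi> + s * t)))) has_integral
      oint (\<phi> - s) (\<phi> + s) (\<lambda>\<xi>. of_real (r \<xi>) * exp (\<i> * of_real \<xi>))) {-1..1}" .
  moreover have "(\<lambda>t. (1 + \<i> * of_real (s * t)) * exp (\<i> * of_real (\<phi> + s * t))) integrable_on {-1..1}"
    by (intro integrable_continuous_real continuous_intros)
  from has_integral_mult_right[OF integrable_integral[OF this], of "of_real D"]
  have "((\<lambda>t. of_real D * ((1 + \<i> * of_real (s * t)) * exp (\<i> * of_real (\<phi> + s * t)))) has_integral
      of_real (2 * cos s * D) * exp (\<i> * of_real \<phi>)) {-1..1}"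
    unfolding integral_exp_ii_boundary by (simp add: mult_ac)
  ultimately show ?thesis
    by (intro integral_unique has_integral_add)
qed

lemma has_vector_derivative_chord_integral_at_circle:
  fixes \<rho> d :: "real \<Rightarrow> real \<Rightarrow> real" and U :: "real set"
  assumes U: "open U" "convex U" "0 \<in> U"
    and smooth_\<rho>: "smooth2_on (U \<times> UNIV) (\<lambda>(e, x). \<rho> e x)"
    and smooth_d: "smooth2_on (U \<times> UNIV) (\<lambda>(e, x). d e x)"
    and \<rho>0: "\<And>x. \<rho> 0 x = 1" and d0: "\<And>x. d 0 x = d0"
  shows "((\<lambda>e. oint (\<phi> - d e \<phi>) (\<phi> + d e \<phi>) (\<lambda>\<xi>. of_real (\<rho> e \<xi>) * exp (\<i> * of_real \<xi>)))
    has_vector_derivative oint (\<phi> - d0) (\<phi> + d0) (\<lambda>\<xi>. of_real (deriv (\<lambda>e. \<rho> e \<xi>) 0) * exp (\<i> * of_real \<xi>))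
      + of_real (2 * cos d0 * deriv (\<lambda>e. d e \<phi>) 0) * exp (\<i> * of_real \<phi>)) (at 0)"
proof -
  obtain \<rho>\<^sub>e \<rho>\<^sub>x where \<rho>: "C1_family U \<rho> \<rho>\<^sub>e \<rho>\<^sub>x"
    using smooth2_on_imp_C1_family[OF smooth_\<rho>] .
  obtain d\<^sub>e d\<^sub>x where d: "C1_family U d d\<^sub>e d\<^sub>x"
    using smooth2_on_imp_C1_family[OF smooth_d] .
  interpret \<rho>: C1_family U \<rho> \<rho>\<^sub>e \<rho>\<^sub>x by (fact \<rho>)
  interpret d: C1_family U d d\<^sub>e d\<^sub>x by (fact d)
  have \<rho>\<^sub>x0: "\<rho>\<^sub>x 0 x = 0" for x
    using \<rho>.has_real_derivative_var[OF U(3), of x UNIV] by (rule DERIV_unique) (simp add: \<rho>0)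
  have deriv_\<rho>: "deriv (\<lambda>e. \<rho> e x) 0 = \<rho>\<^sub>e 0 x" for x
    using \<rho>.has_real_derivative_param[OF U(3), of x UNIV] by (rule DERIV_imp_deriv)
  have deriv_d: "deriv (\<lambda>e. d e \<phi>) 0 = d\<^sub>e 0 \<phi>"
    using d.has_real_derivative_param[OF U(3), of \<phi> UNIV] by (rule DERIV_imp_deriv)
  have "continuous_on UNIV (\<lambda>\<xi>. \<rho>\<^sub>e 0 \<xi>)"
    using U(3) by (intro continuous_on_compose_curried[OF \<rho>.continuous_partials(1)] continuous_intros) auto
  note integral_chord_variation_at_circle[OF this, of d0 \<phi> "d\<^sub>e 0 \<phi>"]
  moreover have "((\<lambda>e. integral {-1..1} (\<lambda>t. of_real (d e \<phi> * \<rho> e (\<phi> + d e \<phi> * t)) * exp (\<i> * of_real (\<phi> + d e \<phi> * t))))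
      has_vector_derivative integral {-1..1} (\<lambda>t. of_real d0 * (of_real (\<rho>\<^sub>e 0 (\<phi> + d0 * t)) * exp (\<i> * of_real (\<phi> + d0 * t)))
        + of_real (d\<^sub>e 0 \<phi>) * ((1 + \<i> * of_real (d0 * t)) * exp (\<i> * of_real (\<phi> + d0 * t))))) (at 0)"
    using has_vector_derivative_rescaled_chord_integral[OF \<rho> d U, of \<phi>]
    by (simp add: \<rho>0 d0 \<rho>\<^sub>x0 algebra_simps)
  moreover have "integral {-1..1} (\<lambda>t. of_real (d e \<phi> * \<rho> e (\<phi> + d e \<phi> * t)) * exp (\<i> * of_real (\<phi> + d e \<phi> * t)))
      = oint (\<phi> - d e \<phi>) (\<phi> + d e \<phi>) (\<lambda>\<xi>. of_real (\<rho> e \<xi>) * exp (\<i> * of_real \<xi>))" if "e \<in> U" for e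
  proof -
    have "continuous_on UNIV (\<lambda>\<xi>. of_real (\<rho> e \<xi>) * exp (\<i> * of_real \<xi>))"
      using that by (intro continuous_intros continuous_on_compose_curried[OF \<rho>.continuous]) auto
    from integral_unique[OF has_integral_oint_rescaled[OF this]] show ?thesis
      by (simp add: mult.assoc)
  qed
  ultimately show ?thesis
    unfolding deriv_\<rho> deriv_d using U by (auto intro: has_vector_derivative_transform_within_open)
qed

lemma linearised_chord_identity:
  fixes \<rho> d :: "real \<Rightarrow> real \<Rightarrow> real" and G :: "real \<Rightarrow> real" and U :: "real set"
  assumes U: "open U" "convex U" "0 \<in> U"
    and smooth_\<rho>: "smooth2_on (U \<times> UNIV) (\<lambda>(e, x). \<rho> e x)"
    and smooth_d: "smooth2_on (U \<times> UNIV) (\<lambda>(e, x). d e x)"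
    and \<rho>0: "\<And>x. \<rho> 0 x = 1" and d0: "\<And>x. d 0 x = d0"
    and chord: "\<And>e \<phi>. e \<in> U \<Longrightarrow> oint (\<phi> - d e \<phi>) (\<phi> + d e \<phi>) (\<lambda>\<xi>. of_real (\<rho> e \<xi>) * exp (\<i> * of_real \<xi>))
      = of_real (G (d e \<phi>)) * exp (\<i> * of_real \<phi>)"
    and G: "(G has_real_derivative G') (at d0)"
  shows "oint (\<phi> - d0) (\<phi> + d0) (\<lambda>\<xi>. of_real (deriv (\<lambda>e. \<rho> e \<xi>) 0) * exp (\<i> * of_real \<xi>))
    = of_real ((G' - 2 * cos d0) * deriv (\<lambda>e. d e \<phi>) 0) * exp (\<i> * of_real \<phi>)"
proof -
  have "((\<lambda>e. G (d e \<phi>)) has_real_derivative G' * deriv (\<lambda>e. d e \<phi>) 0) (at 0)"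
    using DERIV_chain2[OF _ smooth2_on_has_real_derivative_param[OF smooth_d U(3)], of G G'] G by (simp add: d0)
  from has_vector_derivative_mult[OF has_vector_derivative_of_real[OF this]
      has_vector_derivative_const[of "exp (\<i> * of_real \<phi>)"]]
  have "((\<lambda>e. of_real (G (d e \<phi>)) * exp (\<i> * of_real \<phi>))
      has_vector_derivative of_real (G' * deriv (\<lambda>e. d e \<phi>) 0) * exp (\<i> * of_real \<phi>)) (at 0)"
    by simp
  then have "((\<lambda>e. oint (\<phi> - d e \<phi>) (\<phi> + d e \<phi>) (\<lambda>\<xi>. of_real (\<rho> e \<xi>) * exp (\<i> * of_real \<xi>)))
      has_vector_derivative of_real (G' * deriv (\<lambda>e. d e \<phi>) 0) * exp (\<i> * of_real \<phi>)) (at 0)"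
    by (rule has_vector_derivative_transform_within_open[OF _ U(1,3)]) (simp add: chord)
  with has_vector_derivative_chord_integral_at_circle[OF U smooth_\<rho> smooth_d \<rho>0 d0]
  show ?thesis
    by (auto dest: vector_derivative_unique_at simp: algebra_simps)
qed

theorem proposition3p4:
  fixes \<beta> \<delta> \<epsilon>0 d0 :: real
    and \<rho> d :: "real \<Rightarrow> real \<Rightarrow> real"
  assumes beta_pos: "\<beta> > 0"
    and delta: "0 < \<delta>" "\<delta> < pi"
    and eps0: "\<epsilon>0 > 0"
    and smooth_rho: "smooth2_on ({-\<epsilon>0<..<\<epsilon>0} \<times> UNIV) (\<lambda>(e, x). \<rho> e x)"
    and smooth_d: "smooth2_on ({-\<epsilon>0<..<\<epsilon>0} \<times> UNIV) (\<lambda>(e, x). d e x)"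
    and per_rho: "\<And>e x. \<bar>e\<bar> < \<epsilon>0 \<Longrightarrow> \<rho> e (x + 2*pi) = \<rho> e x"
    and per_d: "\<And>e x. \<bar>e\<bar> < \<epsilon>0 \<Longrightarrow> d e (x + 2*pi) = d e x"
    and gutkin: "\<And>e \<phi>. \<bar>e\<bar> < \<epsilon>0 \<Longrightarrow>
        oint (\<phi> - d e \<phi>) (\<phi> + d e \<phi>) (\<lambda>\<xi>. complex_of_real (\<rho> e \<xi>) * exp (\<i> * of_real \<xi>))
        = complex_of_real (2 / \<beta> * sin (\<delta> + d e \<phi>)) * exp (\<i> * of_real \<phi>)"
    and rho0: "\<And>x. \<rho> 0 x = 1"
    and d0: "\<And>x. d 0 x = d0"
  shows "\<beta> * sin d0 = sin (\<delta> + d0) \<and>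
    (\<forall>n::int. real_of_int n * tan d0 \<noteq> tan (real_of_int n * d0) \<longrightarrow>
        fourier_coeff (\<lambda>x. deriv (\<lambda>e. \<rho> e x) 0) n = 0 \<and>
        fourier_coeff (\<lambda>x. deriv (\<lambda>e. d e x) 0) n = 0)"
proof -
  define U where "U = {-\<epsilon>0<..<\<epsilon>0}"
  have U: "open U" "convex U" "0 \<in> U" and U_iff: "e \<in> U \<longleftrightarrow> \<bar>e\<bar> < \<epsilon>0" for e
    using eps0 by (auto simp: U_def)
  have "complex_of_real (2 * sin d0) = of_real (2 / \<beta> * sin (\<delta> + d0))"
    using gutkin[of 0 0] oint_exp_ii[of 0 d0] eps0 by (simp add: rho0 d0)
  then have part_a: "\<beta> * sin d0 = sin (\<delta> + d0)"
    using beta_pos by (simp only: of_real_eq_iff) (simp add: field_simps)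
  define C where "C = 2 / \<beta> * cos (\<delta> + d0) - 2 * cos d0"
  have "C \<noteq> 0"
    using cos_add_neq_mult_cos[OF part_a] sin_gt_zero[OF delta] beta_pos by (auto simp: C_def field_simps)
  have "oint (\<phi> - d0) (\<phi> + d0) (\<lambda>\<xi>. of_real (deriv (\<lambda>e. \<rho> e \<xi>) 0) * exp (\<i> * of_real \<xi>))
      = of_real (C * deriv (\<lambda>e. d e \<phi>) 0) * exp (\<i> * of_real \<phi>)" for \<phi>
    unfolding C_def
    by (rule linearised_chord_identity[where G = "\<lambda>x. 2 / \<beta> * sin (\<delta> + x)",
          OF U smooth_rho[folded U_def] smooth_d[folded U_def] rho0 d0])
      (use beta_pos in \<open>auto simp: gutkin U_iff intro!: derivative_eq_intros\<close>)
  moreover have "deriv (\<lambda>e. \<rho> e (x + 2 * pi)) 0 = deriv (\<lambda>e. \<rho> e x) 0" for x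
    using eventually_nhds_in_open[OF U(1,3)]
    by (intro deriv_cong_ev) (auto elim!: eventually_mono simp: per_rho U_iff)
  ultimately have "of_real (chord_weight d0 (n + 1)) * fourier_coeff (\<lambda>x. deriv (\<lambda>e. \<rho> e x) 0) n
      = of_real C * fourier_coeff (\<lambda>x. deriv (\<lambda>e. d e x) 0) n" for n
    by (intro fourier_coeff_chord_relation smooth2_on_continuous_on_deriv_param[OF smooth_rho[folded U_def] U(3)])
  with \<open>C \<noteq> 0\<close> show ?thesis
    using part_a fourier_coeffs_vanish_unless_gutkin by blast
qed

end
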